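(* Let $\mathcal{D}=(V,E)$ be a directed acyclic graph with well-ordered vertex set $V=\{1,\dots,d\}$ (every edge $i\to j$ has $i<j$), and suppose $\mathcal{D}$ is a polytree, i.e. between any two vertices there is at most one path. Let $X=(X_1,\dots,X_d)$ be given by the recursive max-linear structural equation model $$X_v=\bigvee_{u\in \mathrm{pa}(v)} c_{vu}X_u \vee Z_v,\qquad v=1,\dots,d,$$ with edge weights $c_{vu}>0$ for $u\in\mathrm{pa}(v)$ and independent identically distributed noise variables $Z_1,\dots,Z_d$ with a continuous distribution supported on $(0,\infty)$. Then the minimum max-linear DAG $\mathcal{D}^B$ of $X$ equals $\mathcal{D}$.
   Context: $a\vee b=\max(a,b)$. A walk is a sequence of vertices with consecutive vertices adjacent (ignoring direction); a path is a walk with no repeated vertices; a directed path from $u$ to $v$ is a path $u=k_0\to k_1\to\cdots\to k_n=v$ with all edges pointing forward. $\mathrm{pa}(v)$ is the set of parents of $v$, $\mathrm{an}(v)$ the set of vertices with a directed path to $v$. For a directed path $\pi=[u=k_0\to k_1\to\cdots\to k_n=v]$ define its weight $d_{vu}(\pi)=\prod_{l=0}^{n-1}c_{k_{l+1}k_l}$, and for $u\in\mathrm{an}(v)$ let $b_{vu}=\bigvee_{\pi} d_{vu}(\pi)$, the maximum over all directed paths $\pi$ from $u$ to $v$ (with $b_{vv}=1$ and $b_{vu}=0$ if $u\notin\mathrm{an}(v)\cup\{v\}$); then $X_v=\bigvee_{u} b_{vu}Z_u$. A directed path $\pi$ from $u$ to $v$ is called max-weighted if $d_{vu}(\pi)=b_{vu}$.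 The minimum max-linear DAG $\mathcal{D}^B$ is the DAG obtained from $\mathcal{D}$ by removing every edge that does not lie on any max-weighted path (such removal does not change the distribution of $X$). *)

theory Defs
  imports "HOL-Probability.Probability"
begin

definition pa :: "(nat \<times> nat) set \<Rightarrow> nat \<Rightarrow> nat set" where
  "pa E v = {u. (u, v) \<in> E}"

definition adj :: "(nat \<times> nat) set \<Rightarrow> nat \<Rightarrow> nat \<Rightarrow> bool" where
  "adj E x y \<longleftrightarrow> (x, y) \<in> E \<or> (y, x) \<in> E"

definition is_path :: "(nat \<times> nat) set \<Rightarrow> nat list \<Rightarrow> bool" where
  "is_path E p \<longleftrightarrow> p \<noteq> [] \<and> distinct p \<and>
     (\<forall>i. Suc i < length p \<longrightarrow> adj E (p ! i) (p ! Suc i))"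

definition polytree :: "(nat \<times> nat) set \<Rightarrow> bool" where
  "polytree E \<longleftrightarrow> (\<forall>p q. is_path E p \<and> is_path E q \<and> hd p = hd q \<and> last p = last q
       \<longrightarrow> p = q)"

definition dpath :: "(nat \<times> nat) set \<Rightarrow> nat list \<Rightarrow> nat \<Rightarrow> nat \<Rightarrow> bool" where
  "dpath E p u v \<longleftrightarrow> p \<noteq> [] \<and> distinct p \<and> hd p = u \<and> last p = v \<and>
     (\<forall>i. Suc i < length p \<longrightarrow> (p ! i, p ! Suc i) \<in> E)"

definition path_weight :: "(nat \<Rightarrow> nat \<Rightarrow> real) \<Rightarrow> nat list \<Rightarrow> real" where
  "path_weight c p = (\<Prod>i < length p - 1. c (p ! Suc i) (p ! i))"

text \<open>b_{vu}: maximum weight over directed paths from u to v (0 if none;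
  the trivial path gives b_{vv} = 1).\<close>
definition bcoef :: "(nat \<times> nat) set \<Rightarrow> (nat \<Rightarrow> nat \<Rightarrow> real) \<Rightarrow> nat \<Rightarrow> nat \<Rightarrow> real" where
  "bcoef E c v u = (if \<exists>p. dpath E p u v
      then Max {path_weight c p | p. dpath E p u v} else 0)"

definition max_weighted ::
  "(nat \<times> nat) set \<Rightarrow> (nat \<Rightarrow> nat \<Rightarrow> real) \<Rightarrow> nat list \<Rightarrow> nat \<Rightarrow> nat \<Rightarrow> bool" where
  "max_weighted E c p u v \<longleftrightarrow> dpath E p u v \<and> path_weight c p = bcoef E c v u"

definition min_ml_dag :: "(nat \<times> nat) set \<Rightarrow> (nat \<Rightarrow> nat \<Rightarrow> real) \<Rightarrow> (nat \<times> nat) set" where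
  "min_ml_dag E c = {e \<in> E. \<exists>p u v. max_weighted E c p u v \<and>
       (\<exists>i. Suc i < length p \<and> (p ! i, p ! Suc i) = e)}"

end

theory Submission
  imports Defs
begin

text \<open>In a polytree the edge \<open>u \<rightarrow> v\<close> is the only path from \<open>u\<close> to \<open>v\<close>, so it is the only
  directed path, hence trivially max-weighted, and no edge is removed when passing to
  \<open>\<D>\<^sup>B\<close>.\<close>

lemma dpath_imp_is_path: "dpath E p u v \<Longrightarrow> is_path E p"
  unfolding dpath_def is_path_def adj_def by blast

lemma polytree_dpath_unique:
  assumes "polytree E" "dpath E p u v" "dpath E q u v"
  shows "p = q"
  using assms dpath_imp_is_path unfolding polytree_def dpath_def by metis

lemma dpath_edge:
  assumes "(u, v) \<in> E" "u \<noteq> v"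
  shows "dpath E [u, v] u v"
  using assms unfolding dpath_def by (auto simp: nth_Cons split: nat.splits)

lemma max_weighted_if_unique_dpath:
  assumes p: "dpath E p u v" and unique: "\<And>q. dpath E q u v \<Longrightarrow> q = p"
  shows "max_weighted E c p u v"
proof -
  have "{path_weight c q | q. dpath E q u v} = {path_weight c p}"
    using p unique by blast
  then have "bcoef E c v u = path_weight c p"
    using p unfolding bcoef_def by auto
  then show ?thesis
    using p unfolding max_weighted_def by simp
qed

lemma min_ml_dag_subset: "min_ml_dag E c \<subseteq> E"
  unfolding min_ml_dag_def by blast

lemma edge_in_min_ml_dag:
  assumes "max_weighted E c [u, v] u v" "(u, v) \<in> E"
  shows "(u, v) \<in> min_ml_dag E c"
proof -
  have "Suc 0 < length [u, v] \<and> ([u, v] ! 0, [u, v] ! Suc 0) = (u, v)"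
    by simp
  then show ?thesis
    using assms unfolding min_ml_dag_def by blast
qed

lemma polytree_min_ml_dag_eq:
  assumes poly: "polytree E" and loop_free: "\<And>u v. (u, v) \<in> E \<Longrightarrow> u \<noteq> v"
  shows "min_ml_dag E c = E"
proof
  show "E \<subseteq> min_ml_dag E c"
  proof (clarify)
    fix u v assume uv: "(u, v) \<in> E"
    have edge_path: "dpath E [u, v] u v"
      using uv loop_free dpath_edge by blast
    have "max_weighted E c [u, v] u v"
      using edge_path polytree_dpath_unique[OF poly] max_weighted_if_unique_dpath by metis
    then show "(u, v) \<in> min_ml_dag E c"
      using uv edge_in_min_ml_dag by blast
  qed
qed (rule min_ml_dag_subset)

theorem mainTheorem1:
  fixes d :: nat and E :: "(nat \<times> nat) set" and c :: "nat \<Rightarrow> nat \<Rightarrow> real"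
    and M :: "'a measure" and Z X :: "nat \<Rightarrow> 'a \<Rightarrow> real"
  assumes edges: "E \<subseteq> {(i, j). 1 \<le> i \<and> i < j \<and> j \<le> d}"
    and poly: "polytree E"
    and cpos: "\<And>u v. (u, v) \<in> E \<Longrightarrow> c v u > 0"
    and P: "prob_space M"
    and Zmeas: "\<And>v. v \<in> {1..d} \<Longrightarrow> Z v \<in> borel_measurable M"
    and Zindep: "prob_space.indep_vars M (\<lambda>_. borel) Z {1..d}"
    and Zident: "\<And>v. v \<in> {1..d} \<Longrightarrow> distr M borel (Z v) = distr M borel (Z 1)"
    and Zcont: "\<And>v x. v \<in> {1..d} \<Longrightarrow> measure M {\<omega> \<in> space M. Z v \<omega> = x} = 0"
    and Zpos: "\<And>v. v \<in> {1..d} \<Longrightarrow> (AE \<omega> in M. Z v \<omega> > 0)"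
    and Xsem: "\<And>v \<omega>. v \<in> {1..d} \<Longrightarrow> \<omega> \<in> space M \<Longrightarrow>
        X v \<omega> = Max (insert (Z v \<omega>) {c v u * X u \<omega> | u. u \<in> pa E v})"
  shows "min_ml_dag E c = E"
proof (rule polytree_min_ml_dag_eq[OF poly])
  show "u \<noteq> v" if "(u, v) \<in> E" for u v
    using edges that by auto
qed

end
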